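(* Let $\mathcal{A}$ be an abelian group with $|\mathcal{A}|\ge 3$ and let $G$ be a generalized sun graph. Then $G$ is $\mathcal{A}$-vertex magic if and only if every non-pendant vertex of $G$ is a support vertex. Further, if every non-pendant vertex of $G$ is a support vertex of odd degree, then $G$ is group vertex magic.
   Context: Graphs are finite, simple, undirected. A unicyclic graph is a connected graph with exactly one cycle. A generalized sun is a unicyclic graph $G=(V,E)$ whose unique cycle $C_k$ satisfies $k<|V|$ and such that every vertex not on $C_k$ is pendant (has degree $1$). A support vertex is a vertex adjacent to a pendant vertex. For an additive abelian group $\mathcal{A}$ with identity $0$, a map $\ell:V\to\mathcal{A}\setminus\{0\}$ is an $\mathcal{A}$-vertex magic labeling if there is $\mu\in\mathcal{A}$ with $\sum_{u\in N(v)}\ell(u)=\mu$ for all $v\in V$; $G$ is $\mathcal{A}$-vertex magic if such a labeling exists, and group vertex magic if it is $\mathcal{A}$-vertex magic for every nontrivial abelian group $\mathcal{A}$. *)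

theory Defs
  imports Main
begin

definition simple_graph :: "'v set \<Rightarrow> ('v \<Rightarrow> 'v \<Rightarrow> bool) \<Rightarrow> bool" where
  "simple_graph V E \<longleftrightarrow> finite V \<and> (\<forall>u v. E u v \<longrightarrow> u \<in> V \<and> v \<in> V)
     \<and> (\<forall>u v. E u v \<longrightarrow> E v u) \<and> (\<forall>v. \<not> E v v)"

definition nbhd :: "'v set \<Rightarrow> ('v \<Rightarrow> 'v \<Rightarrow> bool) \<Rightarrow> 'v \<Rightarrow> 'v set" where
  "nbhd V E v = {u \<in> V. E v u}"

definition degree :: "'v set \<Rightarrow> ('v \<Rightarrow> 'v \<Rightarrow> bool) \<Rightarrow> 'v \<Rightarrow> nat" where
  "degree V E v = card (nbhd V E v)"

definition connected_graph :: "'v set \<Rightarrow> ('v \<Rightarrow> 'v \<Rightarrow> bool) \<Rightarrow> bool" where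
  "connected_graph V E \<longleftrightarrow> V \<noteq> {} \<and>
     (\<forall>u\<in>V. \<forall>v\<in>V. (u, v) \<in> {(x, y). E x y}\<^sup>*)"

definition cycle_edges :: "'v list \<Rightarrow> 'v set set" where
  "cycle_edges xs = {{xs ! i, xs ! ((i + 1) mod length xs)} | i. i < length xs}"

definition is_cycle :: "'v set \<Rightarrow> ('v \<Rightarrow> 'v \<Rightarrow> bool) \<Rightarrow> 'v set set \<Rightarrow> bool" where
  "is_cycle V E C \<longleftrightarrow> (\<exists>xs. distinct xs \<and> length xs \<ge> 3 \<and> set xs \<subseteq> V \<and>
     (\<forall>i < length xs. E (xs ! i) (xs ! ((i + 1) mod length xs))) \<and> C = cycle_edges xs)"

definition unicyclic :: "'v set \<Rightarrow> ('v \<Rightarrow> 'v \<Rightarrow> bool) \<Rightarrow> bool" where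
  "unicyclic V E \<longleftrightarrow> simple_graph V E \<and> connected_graph V E \<and> (\<exists>!C. is_cycle V E C)"

definition pendant :: "'v set \<Rightarrow> ('v \<Rightarrow> 'v \<Rightarrow> bool) \<Rightarrow> 'v \<Rightarrow> bool" where
  "pendant V E v \<longleftrightarrow> v \<in> V \<and> degree V E v = 1"

definition support_vertex :: "'v set \<Rightarrow> ('v \<Rightarrow> 'v \<Rightarrow> bool) \<Rightarrow> 'v \<Rightarrow> bool" where
  "support_vertex V E v \<longleftrightarrow> v \<in> V \<and> (\<exists>u\<in>V. E v u \<and> pendant V E u)"

definition generalized_sun :: "'v set \<Rightarrow> ('v \<Rightarrow> 'v \<Rightarrow> bool) \<Rightarrow> bool" where
  "generalized_sun V E \<longleftrightarrow> unicyclic V E \<and>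
     (\<forall>C. is_cycle V E C \<longrightarrow> \<Union>C \<subset> V \<and> (\<forall>v \<in> V - \<Union>C. pendant V E v))"

definition vertex_magic_labeling ::
  "'v set \<Rightarrow> ('v \<Rightarrow> 'v \<Rightarrow> bool) \<Rightarrow> ('v \<Rightarrow> 'a::ab_group_add) \<Rightarrow> bool" where
  "vertex_magic_labeling V E l \<longleftrightarrow> (\<forall>v\<in>V. l v \<noteq> 0) \<and>
     (\<exists>\<mu>. \<forall>v\<in>V. (\<Sum>u\<in>nbhd V E v. l u) = \<mu>)"

definition A_vertex_magic ::
  "'a::ab_group_add itself \<Rightarrow> 'v set \<Rightarrow> ('v \<Rightarrow> 'v \<Rightarrow> bool) \<Rightarrow> bool" where
  "A_vertex_magic A V E \<longleftrightarrow> (\<exists>l :: 'v \<Rightarrow> 'a. vertex_magic_labeling V E l)"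

end

theory Submission
  imports Defs
begin

text \<open>Since the cycle is unique it has no chord, so a cycle vertex is adjacent exactly to
its two cycle neighbours and to its pendant vertices, and every pendant vertex hangs on
the cycle. In a magic labeling with constant \<mu>, the neighbourhood of a pendant vertex
forces the label of every support vertex to be \<mu>. If a cycle vertex c without pendants
followed a support vertex, the neighbourhood sum at c would force a zero label on the
vertex after c; hence support vertices propagate around the cycle from any one of them.
Conversely, label all cycle vertices \<mu> \<noteq> 0 and the pendants at each cycle vertex by
nonzero elements summing to -\<mu>. This is possible for any nonempty set of pendants when
the group has at least three elements, and for an odd number of pendants (-\<mu> followed
by pairs a, -a) in every nontrivial group.\<close>

lemma cyclic_induct:
  assumes "i0 < n" "Q i0" and step: "\<And>i. i < n \<Longrightarrow> Q i \<Longrightarrow> Q (Suc i mod n)" and "k < n"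
  shows "Q k"
proof -
  have "Q ((i0 + m) mod n)" for m
  proof (induction m)
    case 0
    then show ?case using assms(1,2) by simp
  next
    case (Suc m)
    then show ?case
      using step[of "(i0 + m) mod n"] assms(1) by (simp add: mod_Suc_eq)
  qed
  from this[of "k + n - i0"] show ?thesis
    using assms(1,4) by simp
qed

lemma ex_nonzero_neq:
  assumes "infinite (UNIV :: 'a::zero set) \<or> card (UNIV :: 'a set) \<ge> 3"
  shows "\<exists>a::'a. a \<noteq> 0 \<and> a \<noteq> s"
proof (rule ccontr)
  assume "\<not> ?thesis"
  then have "(UNIV :: 'a set) \<subseteq> {0, s}" by blast
  moreover have "card {0, s} \<le> 2" by (simp add: card_insert_le_m1)
  ultimately show False
    using assms finite_subset[of UNIV "{0, s}"] card_mono[of "{0, s}" UNIV] by auto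
qed

lemma ex_nonzero_summands:
  fixes t :: "'a::ab_group_add"
  assumes big: "infinite (UNIV :: 'a set) \<or> card (UNIV :: 'a set) \<ge> 3"
    and "finite S" "S \<noteq> {}" "t \<noteq> 0"
  shows "\<exists>f. (\<forall>x\<in>S. f x \<noteq> 0) \<and> sum f S = t"
  using assms(2-4)
proof (induction S arbitrary: t rule: finite_ne_induct)
  case (singleton x)
  then show ?case by (intro exI[of _ "\<lambda>_. t"]) simp
next
  case (insert x F)
  obtain a where a: "a \<noteq> 0" "a \<noteq> t" using ex_nonzero_neq[OF big] by blast
  then have "t - a \<noteq> 0" by simp
  then obtain f where f: "\<forall>y\<in>F. f y \<noteq> 0" "sum f F = t - a" using insert.IH by blast
  have "sum (f(x := a)) F = sum f F" using insert.hyps by (intro sum.cong) auto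
  then show ?case using insert.hyps f a by (intro exI[of _ "f(x := a)"]) simp
qed

lemma ex_nonzero_summands_odd_card:
  fixes t :: "'a::ab_group_add"
  assumes "t \<noteq> 0" "finite S" "odd (card S)"
  shows "\<exists>f. (\<forall>x\<in>S. f x \<noteq> 0) \<and> sum f S = t"
proof -
  obtain k where "card S = 2 * k + 1" using assms(3) by (rule oddE)
  with assms(2) show ?thesis
  proof (induction k arbitrary: S)
    case 0
    then obtain x where "S = {x}" using card_1_singletonE by auto
    then show ?case using assms(1) by (intro exI[of _ "\<lambda>_. t"]) simp
  next
    case (Suc k)
    then have "\<not> card S \<le> Suc 0" by simp
    then obtain x y where xy: "x \<in> S" "y \<in> S" "x \<noteq> y"
      using card_le_Suc0_iff_eq[OF Suc.prems(1)] by blast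
    define S' where "S' = S - {x, y}"
    have S: "S = insert x (insert y S')" "x \<notin> S'" "y \<notin> S'" "finite S'"
      using xy Suc.prems(1) by (auto simp: S'_def)
    have "card S' = 2 * k + 1" using Suc.prems xy by (simp add: S'_def card_Diff_subset)
    then obtain f where f: "\<forall>z\<in>S'. f z \<noteq> 0" "sum f S' = t"
      using Suc.IH S(4) by blast
    let ?g = "f(x := t, y := - t)"
    have "sum ?g S' = sum f S'" using S by (intro sum.cong) auto
    then have "sum ?g S = t" using S xy f by simp
    moreover have "\<forall>z\<in>S. ?g z \<noteq> 0" using S f assms(1) by auto
    ultimately show ?case by blast
  qed
qed

definition cycle_walk :: "'v set \<Rightarrow> ('v \<Rightarrow> 'v \<Rightarrow> bool) \<Rightarrow> 'v list \<Rightarrow> bool" where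
  "cycle_walk V E xs \<longleftrightarrow> distinct xs \<and> length xs \<ge> 3 \<and> set xs \<subseteq> V \<and>
     (\<forall>i < length xs. E (xs ! i) (xs ! ((i + 1) mod length xs)))"

lemma is_cycle_iff_cycle_walk:
  "is_cycle V E C \<longleftrightarrow> (\<exists>xs. cycle_walk V E xs \<and> C = cycle_edges xs)"
  unfolding is_cycle_def cycle_walk_def by blast

lemma Union_cycle_edges:
  assumes "xs \<noteq> []" shows "\<Union>(cycle_edges xs) = set xs"
proof
  show "\<Union>(cycle_edges xs) \<subseteq> set xs"
    using assms by (auto simp: cycle_edges_def)
  show "set xs \<subseteq> \<Union>(cycle_edges xs)"
  proof
    fix x assume "x \<in> set xs"
    then obtain i where "i < length xs" "x = xs ! i" by (auto simp: in_set_conv_nth)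
    then show "x \<in> \<Union>(cycle_edges xs)" by (auto simp: cycle_edges_def)
  qed
qed

lemma chord_notin_cycle_edges:
  assumes "distinct xs" "a + 1 < b" "b < length xs" "\<not> (a = 0 \<and> b = length xs - 1)"
  shows "{xs ! a, xs ! b} \<notin> cycle_edges xs"
proof
  let ?n = "length xs"
  assume "{xs ! a, xs ! b} \<in> cycle_edges xs"
  then obtain k where k: "k < ?n" "{xs ! a, xs ! b} = {xs ! k, xs ! ((k + 1) mod ?n)}"
    unfolding cycle_edges_def by auto
  have "0 < ?n" using k(1) by linarith
  then have "(k + 1) mod ?n < ?n" by simp
  with k assms(1,2,3) have idx: "(a = k \<and> b = (k + 1) mod ?n) \<or> (a = (k + 1) mod ?n \<and> b = k)"
    by (auto simp: doubleton_eq_iff nth_eq_iff_index_eq)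
  show False
  proof (cases "k + 1 < ?n")
    case True
    then show False using idx assms(2) by auto
  next
    case False
    then have "k + 1 = ?n" using k(1) by simp
    then show False using idx assms(2,4) by auto
  qed
qed

lemma cycle_walk_chord_subpath:
  assumes walk: "cycle_walk V E xs" and sym: "\<And>u v. E u v \<Longrightarrow> E v u"
    and ab: "a + 2 \<le> b" "b < length xs" and chord: "E (xs ! a) (xs ! b)"
  shows "cycle_walk V E (take (b - a + 1) (drop a xs))"
proof -
  let ?ys = "take (b - a + 1) (drop a xs)"
  have len: "length ?ys = b - a + 1" using ab by simp
  have ys_nth: "?ys ! k = xs ! (a + k)" if "k \<le> b - a" for k
    using that ab by simp
  have "E (?ys ! k) (?ys ! ((k + 1) mod length ?ys))" if k: "k < length ?ys" for k
  proof (cases "k + 1 < length ?ys")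
    case True
    have "a + k < length xs" "(a + k + 1) mod length xs = a + k + 1"
      using True len ab by simp_all
    then have "E (xs ! (a + k)) (xs ! (a + k + 1))"
      using walk unfolding cycle_walk_def by metis
    then show ?thesis using True len ab ys_nth[of k] ys_nth[of "k + 1"] by simp
  next
    case False
    then have "k = b - a" using k unfolding len by linarith
    then show ?thesis using ys_nth[of k] ys_nth[of 0] ab len sym[OF chord] by simp
  qed
  moreover have "set ?ys \<subseteq> V"
    using walk set_take_subset set_drop_subset unfolding cycle_walk_def by (meson order.trans)
  ultimately show ?thesis
    using walk len ab unfolding cycle_walk_def by simp
qed

lemma unique_cycle_no_chord:
  assumes unique: "\<exists>!C. is_cycle V E C" and sym: "\<And>u v. E u v \<Longrightarrow> E v u"
    and walk: "cycle_walk V E xs"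
    and ab: "a < b" "b < length xs" and edge: "E (xs ! a) (xs ! b)"
  shows "b = a + 1 \<or> (a = 0 \<and> b = length xs - 1)"
proof (rule ccontr)
  assume chord: "\<not> ?thesis"
  define ys where "ys = take (b - a + 1) (drop a xs)"
  have "is_cycle V E (cycle_edges ys)"
    using cycle_walk_chord_subpath[OF walk sym _ ab(2) edge] chord ab(1)
    unfolding ys_def is_cycle_iff_cycle_walk by fastforce
  moreover have "is_cycle V E (cycle_edges xs)"
    using walk is_cycle_iff_cycle_walk by blast
  moreover have "{xs ! a, xs ! b} \<in> cycle_edges ys"
  proof -
    have "{xs ! a, xs ! b} = {ys ! (b - a), ys ! ((b - a + 1) mod length ys)}"
      using ab by (simp add: ys_def insert_commute)
    moreover have "b - a < length ys" using ab by (simp add: ys_def)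
    ultimately show ?thesis unfolding cycle_edges_def by blast
  qed
  moreover have "{xs ! a, xs ! b} \<notin> cycle_edges xs"
    using chord_notin_cycle_edges walk chord ab unfolding cycle_walk_def by force
  ultimately show False using unique by blast
qed

text \<open>xs lists the vertices of the cycle in order; the uniqueness of the cycle enters only
through no_chord.\<close>

locale sun_cycle =
  fixes V :: "'v set" and E :: "'v \<Rightarrow> 'v \<Rightarrow> bool" and xs :: "'v list"
  assumes simple: "simple_graph V E"
    and connected: "connected_graph V E"
    and walk: "cycle_walk V E xs"
    and no_chord: "\<And>a b. a < b \<Longrightarrow> b < length xs \<Longrightarrow> E (xs ! a) (xs ! b) \<Longrightarrow>
                     b = a + 1 \<or> (a = 0 \<and> b = length xs - 1)"
    and off_cycle_pendant: "\<And>v. v \<in> V - set xs \<Longrightarrow> pendant V E v"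
    and off_cycle_nonempty: "V - set xs \<noteq> {}"

lemma generalized_sun_imp_sun_cycle:
  assumes "generalized_sun V E" shows "\<exists>xs. sun_cycle V E xs"
proof -
  have simple: "simple_graph V E" and "connected_graph V E" and unique: "\<exists>!C. is_cycle V E C"
    using assms by (auto simp: generalized_sun_def unicyclic_def)
  then obtain xs where walk: "cycle_walk V E xs" and C: "is_cycle V E (cycle_edges xs)"
    using is_cycle_iff_cycle_walk by metis
  have "xs \<noteq> []" using walk by (auto simp: cycle_walk_def)
  moreover have "\<Union>(cycle_edges xs) \<subset> V \<and> (\<forall>v \<in> V - \<Union>(cycle_edges xs). pendant V E v)"
    using assms C by (simp add: generalized_sun_def)
  ultimately have "set xs \<subset> V \<and> (\<forall>v \<in> V - set xs. pendant V E v)"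
    by (simp add: Union_cycle_edges)
  moreover have "\<And>u v. E u v \<Longrightarrow> E v u" using simple by (simp add: simple_graph_def)
  ultimately have "sun_cycle V E xs"
    using simple \<open>connected_graph V E\<close> walk unique_cycle_no_chord[OF unique _ walk]
    by unfold_locales blast+
  then show ?thesis by blast
qed

context sun_cycle
begin

abbreviation n :: nat where "n \<equiv> length xs"

definition cyc_succ :: "nat \<Rightarrow> 'v" where
  "cyc_succ i = xs ! (Suc i mod n)"

definition cyc_pred :: "nat \<Rightarrow> 'v" where
  "cyc_pred i = xs ! (if i = 0 then n - 1 else i - 1)"

definition pendant_nbhd :: "'v \<Rightarrow> 'v set" where
  "pendant_nbhd c = nbhd V E c - set xs"

lemma E_sym: "E u v \<Longrightarrow> E v u"
  and E_in_V: "E u v \<Longrightarrow> u \<in> V \<and> v \<in> V"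
  and E_irrefl: "\<not> E v v"
  and finite_nbhd: "finite (nbhd V E v)"
  using simple by (auto simp: simple_graph_def nbhd_def)

lemma distinct_cycle: "distinct xs"
  and length_cycle: "3 \<le> n"
  and cycle_subset: "set xs \<subseteq> V"
  and cycle_adj: "i < n \<Longrightarrow> E (xs ! i) (xs ! (Suc i mod n))"
  using walk by (auto simp: cycle_walk_def)

lemma length_pos: "0 < n"
  using length_cycle by linarith

lemma mod_length_less: "k mod n < n"
  using length_pos by simp

lemma finite_pendant_nbhd: "finite (pendant_nbhd c)"
  using finite_nbhd by (simp add: pendant_nbhd_def)

lemma cyc_succ_pred_in_cycle: "i < n \<Longrightarrow> cyc_succ i \<in> set xs \<and> cyc_pred i \<in> set xs"
  using length_cycle mod_length_less by (auto simp: cyc_succ_def cyc_pred_def)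

lemma adj_cyc_succ_pred:
  assumes "i < n" shows "E (xs ! i) (cyc_succ i)" "E (xs ! i) (cyc_pred i)"
proof -
  show "E (xs ! i) (cyc_succ i)" using cycle_adj assms by (simp add: cyc_succ_def)
  let ?j = "if i = 0 then n - 1 else i - 1"
  have "?j < n" "Suc ?j mod n = i" using assms length_cycle by auto
  then show "E (xs ! i) (cyc_pred i)"
    using cycle_adj[of ?j] E_sym by (simp add: cyc_pred_def)
qed

lemma cyc_succ_neq_pred:
  assumes "i < n" shows "cyc_succ i \<noteq> cyc_pred i"
proof -
  have "Suc i mod n \<noteq> (if i = 0 then n - 1 else i - 1)"
    using assms length_cycle by (auto simp: mod_Suc)
  then show ?thesis
    using nth_eq_iff_index_eq[OF distinct_cycle] assms length_cycle mod_length_less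
    by (auto simp: cyc_succ_def cyc_pred_def)
qed

lemma nbhd_inter_cycle:
  assumes i: "i < n" shows "nbhd V E (xs ! i) \<inter> set xs = {cyc_succ i, cyc_pred i}"
proof
  show "{cyc_succ i, cyc_pred i} \<subseteq> nbhd V E (xs ! i) \<inter> set xs"
    using adj_cyc_succ_pred[OF i] cyc_succ_pred_in_cycle[OF i] E_in_V by (auto simp: nbhd_def)
  show "nbhd V E (xs ! i) \<inter> set xs \<subseteq> {cyc_succ i, cyc_pred i}"
  proof
    fix u assume u: "u \<in> nbhd V E (xs ! i) \<inter> set xs"
    then obtain j where j: "j < n" "u = xs ! j" by (auto simp: in_set_conv_nth)
    have edge: "E (xs ! i) (xs ! j)" using u j by (simp add: nbhd_def)
    then have "i \<noteq> j" using E_irrefl by auto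
    then consider "i < j" | "j < i" by linarith
    then show "u \<in> {cyc_succ i, cyc_pred i}"
    proof cases
      case 1
      then have "j = i + 1 \<or> (i = 0 \<and> j = n - 1)" using no_chord j(1) edge by blast
      then show ?thesis using j by (auto simp: cyc_succ_def cyc_pred_def)
    next
      case 2
      then have "i = j + 1 \<or> (j = 0 \<and> i = n - 1)" using no_chord i E_sym[OF edge] by blast
      then show ?thesis using j length_cycle by (auto simp: cyc_succ_def cyc_pred_def)
    qed
  qed
qed

lemma nbhd_cycle_vertex:
  "i < n \<Longrightarrow> nbhd V E (xs ! i) = {cyc_succ i, cyc_pred i} \<union> pendant_nbhd (xs ! i)"
  using nbhd_inter_cycle by (auto simp: pendant_nbhd_def)

lemma degree_cycle_vertex:
  assumes "c \<in> set xs" shows "degree V E c = 2 + card (pendant_nbhd c)"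
proof -
  obtain i where i: "i < n" "c = xs ! i" using assms by (auto simp: in_set_conv_nth)
  have "{cyc_succ i, cyc_pred i} \<inter> pendant_nbhd c = {}"
    using cyc_succ_pred_in_cycle[OF i(1)] by (auto simp: pendant_nbhd_def)
  then show ?thesis
    using nbhd_cycle_vertex[OF i(1)] cyc_succ_neq_pred[OF i(1)] finite_pendant_nbhd i(2)
    by (simp add: degree_def card_Un_disjoint)
qed

lemma pendant_iff_off_cycle: "v \<in> V \<Longrightarrow> pendant V E v \<longleftrightarrow> v \<notin> set xs"
  using off_cycle_pendant degree_cycle_vertex by (fastforce simp: pendant_def)

lemma nbhd_off_cycle:
  assumes v: "v \<in> V - set xs" shows "\<exists>c\<in>set xs. nbhd V E v = {c}"
proof -
  obtain c where c: "nbhd V E v = {c}"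
    using off_cycle_pendant[OF v] by (auto simp: pendant_def degree_def card_1_singleton_iff)
  then have "E v c" "c \<in> V" by (auto simp: nbhd_def)
  have "c \<in> set xs"
  proof (rule ccontr)
    assume "c \<notin> set xs"
    then obtain d where "nbhd V E c = {d}"
      using off_cycle_pendant[of c] \<open>c \<in> V\<close>
      by (auto simp: pendant_def degree_def card_1_singleton_iff)
    moreover have "v \<in> nbhd V E c" using \<open>E v c\<close> E_sym v by (simp add: nbhd_def)
    ultimately have "nbhd V E c = {v}" by simp
    \<comment> \<open>then the edge vc is a whole component, which the connected graph cannot have\<close>
    have closed: "w \<in> {v, c}" if "(v, w) \<in> {(x, y). E x y}\<^sup>*" for w
      using that
    proof (induction rule: rtrancl_induct)
      case (step y z)
      then have "z \<in> nbhd V E y" using E_in_V by (simp add: nbhd_def)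
      then show ?case using step.IH c \<open>nbhd V E c = {v}\<close> by auto
    qed simp
    have "xs ! 0 \<in> V" using cycle_subset nth_mem[OF length_pos] by blast
    then have "(v, xs ! 0) \<in> {(x, y). E x y}\<^sup>*"
      using connected v by (simp add: connected_graph_def)
    then show False using closed v \<open>c \<notin> set xs\<close> nth_mem[OF length_pos] by auto
  qed
  then show ?thesis using c by blast
qed

lemma off_cycle_in_pendant_nbhd:
  assumes v: "v \<in> V - set xs" shows "\<exists>c\<in>set xs. v \<in> pendant_nbhd c \<and> nbhd V E v = {c}"
proof -
  obtain c where c: "c \<in> set xs" "nbhd V E v = {c}" using nbhd_off_cycle[OF v] by blast
  then have "v \<in> pendant_nbhd c" using v E_sym by (auto simp: pendant_nbhd_def nbhd_def)
  then show ?thesis using c by blast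
qed

lemma nbhd_pendant_nbhd:
  assumes "c \<in> set xs" "p \<in> pendant_nbhd c" shows "nbhd V E p = {c}"
proof -
  have p: "p \<in> V - set xs" using assms by (auto simp: pendant_nbhd_def nbhd_def)
  obtain c' where "nbhd V E p = {c'}" using nbhd_off_cycle[OF p] by blast
  moreover have "c \<in> nbhd V E p"
    using assms cycle_subset E_sym by (auto simp: pendant_nbhd_def nbhd_def)
  ultimately show ?thesis by simp
qed

lemma support_vertex_iff:
  "c \<in> set xs \<Longrightarrow> support_vertex V E c \<longleftrightarrow> pendant_nbhd c \<noteq> {}"
  using pendant_iff_off_cycle cycle_subset
  by (auto simp: support_vertex_def pendant_nbhd_def nbhd_def)

lemma all_support_iff:
  "(\<forall>v\<in>V. \<not> pendant V E v \<longrightarrow> support_vertex V E v) \<longleftrightarrow> (\<forall>c\<in>set xs. pendant_nbhd c \<noteq> {})"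
  using pendant_iff_off_cycle support_vertex_iff cycle_subset by blast

lemma magic_label_support_vertex:
  assumes magic: "\<forall>v\<in>V. (\<Sum>u\<in>nbhd V E v. l u) = \<mu>"
    and c: "c \<in> set xs" "pendant_nbhd c \<noteq> {}"
  shows "l c = \<mu>"
proof -
  obtain p where p: "p \<in> pendant_nbhd c" using c by blast
  then have "p \<in> V" by (auto simp: pendant_nbhd_def nbhd_def)
  then show ?thesis using magic nbhd_pendant_nbhd[OF c(1) p] by auto
qed

lemma magic_support_succ:
  fixes l :: "'v \<Rightarrow> 'a::ab_group_add"
  assumes nonzero: "\<forall>v\<in>V. l v \<noteq> 0" and magic: "\<forall>v\<in>V. (\<Sum>u\<in>nbhd V E v. l u) = \<mu>"
    and i: "i < n" and support: "pendant_nbhd (xs ! i) \<noteq> {}"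
  shows "pendant_nbhd (xs ! (Suc i mod n)) \<noteq> {}"
proof
  let ?j = "Suc i mod n"
  have pred: "cyc_pred ?j = xs ! i"
  proof (cases "Suc i = n")
    case True
    then have "?j = 0" "n - 1 = i" by auto
    then show ?thesis by (simp add: cyc_pred_def)
  qed (use i in \<open>simp add: cyc_pred_def\<close>)
  assume "pendant_nbhd (xs ! ?j) = {}"
  then have "nbhd V E (xs ! ?j) = {cyc_succ ?j, xs ! i}"
    using nbhd_cycle_vertex[OF mod_length_less] pred by simp
  moreover have "xs ! ?j \<in> V" using cycle_subset mod_length_less by auto
  ultimately have "l (cyc_succ ?j) + l (xs ! i) = \<mu>"
    using magic cyc_succ_neq_pred[OF mod_length_less, of "Suc i"] pred by auto
  moreover have "l (xs ! i) = \<mu>"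
    using magic_label_support_vertex[OF magic _ support] i by simp
  ultimately have "l (cyc_succ ?j) = 0" by simp
  moreover have "cyc_succ ?j \<in> V"
    using cyc_succ_pred_in_cycle[OF mod_length_less] cycle_subset by blast
  ultimately show False using nonzero by auto
qed

lemma vertex_magic_imp_support:
  assumes "vertex_magic_labeling V E l" and c: "c \<in> set xs"
  shows "pendant_nbhd c \<noteq> {}"
proof -
  obtain \<mu> where nonzero: "\<forall>v\<in>V. l v \<noteq> 0" and magic: "\<forall>v\<in>V. (\<Sum>u\<in>nbhd V E v. l u) = \<mu>"
    using assms(1) unfolding vertex_magic_labeling_def by blast
  obtain v where "v \<in> V - set xs" using off_cycle_nonempty by blast
  then obtain c0 where "c0 \<in> set xs" "pendant_nbhd c0 \<noteq> {}"
    using off_cycle_in_pendant_nbhd by blast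
  then obtain i0 where i0: "i0 < n" "pendant_nbhd (xs ! i0) \<noteq> {}"
    by (auto simp: in_set_conv_nth)
  obtain k where k: "k < n" "c = xs ! k" using c by (auto simp: in_set_conv_nth)
  show ?thesis
    using cyclic_induct[where Q = "\<lambda>i. pendant_nbhd (xs ! i) \<noteq> {}", OF i0 _ k(1)]
      magic_support_succ[OF nonzero magic] k(2) by blast
qed

lemma A_vertex_magic_of_pendant_labels:
  fixes \<mu> :: "'a::ab_group_add"
  assumes "\<mu> \<noteq> 0"
    and "\<forall>c\<in>set xs. \<exists>f. (\<forall>x\<in>pendant_nbhd c. f x \<noteq> 0) \<and> sum f (pendant_nbhd c) = - \<mu>"
  shows "A_vertex_magic TYPE('a) V E"
proof -
  obtain F where F: "\<And>c. c \<in> set xs \<Longrightarrow>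
      (\<forall>x\<in>pendant_nbhd c. F c x \<noteq> 0) \<and> sum (F c) (pendant_nbhd c) = - \<mu>"
    using bchoice[OF assms(2)] by blast
  define l where "l v = (if v \<in> set xs then \<mu> else F (THE c. E v c) v)" for v
  have l_pendant: "l p = F c p" if "c \<in> set xs" "p \<in> pendant_nbhd c" for c p
  proof -
    have "E p = (\<lambda>u. u = c)"
      using nbhd_pendant_nbhd[OF that] E_in_V by (auto simp: nbhd_def)
    then show ?thesis using that by (simp add: l_def pendant_nbhd_def)
  qed
  have "l v \<noteq> 0 \<and> (\<Sum>u\<in>nbhd V E v. l u) = \<mu>" if v: "v \<in> V" for v
  proof (cases "v \<in> set xs")
    case False
    then obtain c where c: "c \<in> set xs" "v \<in> pendant_nbhd c" "nbhd V E v = {c}"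
      using off_cycle_in_pendant_nbhd v by blast
    then show ?thesis using F l_pendant by (simp add: l_def)
  next
    case True
    then obtain i where i: "i < n" "v = xs ! i" by (auto simp: in_set_conv_nth)
    have "sum l (pendant_nbhd v) = - \<mu>"
      using F[OF True] l_pendant[OF True] by (simp cong: sum.cong)
    moreover have "{cyc_succ i, cyc_pred i} \<inter> pendant_nbhd v = {}"
      using cyc_succ_pred_in_cycle[OF i(1)] by (auto simp: pendant_nbhd_def)
    ultimately have "(\<Sum>u\<in>nbhd V E v. l u) = \<mu> + \<mu> + - \<mu>"
      using nbhd_cycle_vertex[OF i(1)] cyc_succ_neq_pred[OF i(1)] cyc_succ_pred_in_cycle[OF i(1)]
        finite_pendant_nbhd i(2) by (simp add: sum.union_disjoint l_def)
    then show ?thesis using True assms(1) by (simp add: l_def)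
  qed
  then show ?thesis
    unfolding A_vertex_magic_def vertex_magic_labeling_def by blast
qed

lemma A_vertex_magic_iff_support:
  assumes "infinite (UNIV :: 'a::ab_group_add set) \<or> card (UNIV :: 'a set) \<ge> 3"
  shows "A_vertex_magic TYPE('a) V E \<longleftrightarrow> (\<forall>c\<in>set xs. pendant_nbhd c \<noteq> {})"
proof
  assume "A_vertex_magic TYPE('a) V E"
  then show "\<forall>c\<in>set xs. pendant_nbhd c \<noteq> {}"
    using vertex_magic_imp_support unfolding A_vertex_magic_def by blast
next
  assume "\<forall>c\<in>set xs. pendant_nbhd c \<noteq> {}"
  moreover obtain \<mu> :: 'a where "\<mu> \<noteq> 0" using ex_nonzero_neq[OF assms] by blast
  ultimately show "A_vertex_magic TYPE('a) V E"
    using ex_nonzero_summands[OF assms finite_pendant_nbhd]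
    by (intro A_vertex_magic_of_pendant_labels) auto
qed

lemma A_vertex_magic_if_odd_pendant_nbhds:
  fixes x y :: "'a::ab_group_add"
  assumes "x \<noteq> y" and "\<forall>c\<in>set xs. odd (card (pendant_nbhd c))"
  shows "A_vertex_magic TYPE('a) V E"
proof (rule A_vertex_magic_of_pendant_labels)
  show "x - y \<noteq> 0" using assms(1) by simp
  then show "\<forall>c\<in>set xs. \<exists>f. (\<forall>z\<in>pendant_nbhd c. f z \<noteq> 0) \<and> sum f (pendant_nbhd c) = - (x - y)"
    using assms(2) ex_nonzero_summands_odd_card[OF _ finite_pendant_nbhd]
    by (meson neg_equal_0_iff_equal)
qed

end

theorem lemma2p5:
  fixes V :: "'v set" and E :: "'v \<Rightarrow> 'v \<Rightarrow> bool"
  assumes "generalized_sun V E"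
  shows "((infinite (UNIV :: 'a::ab_group_add set) \<or> card (UNIV :: 'a set) \<ge> 3) \<longrightarrow>
            (A_vertex_magic TYPE('a) V E \<longleftrightarrow>
               (\<forall>v\<in>V. \<not> pendant V E v \<longrightarrow> support_vertex V E v)))
       \<and> ((\<forall>v\<in>V. \<not> pendant V E v \<longrightarrow> support_vertex V E v \<and> odd (degree V E v)) \<longrightarrow>
            (\<exists>x y :: 'b::ab_group_add. x \<noteq> y) \<longrightarrow> A_vertex_magic TYPE('b) V E)"
proof -
  obtain xs where "sun_cycle V E xs" using generalized_sun_imp_sun_cycle[OF assms] by blast
  then interpret sun_cycle V E xs .
  have odd_pendant_nbhds: "\<forall>c\<in>set xs. odd (card (pendant_nbhd c))"
    if "\<forall>v\<in>V. \<not> pendant V E v \<longrightarrow> support_vertex V E v \<and> odd (degree V E v)"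
    using that pendant_iff_off_cycle cycle_subset degree_cycle_vertex by fastforce
  show ?thesis
  proof (intro conjI impI)
    assume "infinite (UNIV :: 'a set) \<or> card (UNIV :: 'a set) \<ge> 3"
    then show "A_vertex_magic TYPE('a) V E \<longleftrightarrow>
        (\<forall>v\<in>V. \<not> pendant V E v \<longrightarrow> support_vertex V E v)"
      by (simp only: A_vertex_magic_iff_support all_support_iff)
  next
    assume "\<forall>v\<in>V. \<not> pendant V E v \<longrightarrow> support_vertex V E v \<and> odd (degree V E v)"
      and "\<exists>x y :: 'b. x \<noteq> y"
    then show "A_vertex_magic TYPE('b) V E"
      using A_vertex_magic_if_odd_pendant_nbhds odd_pendant_nbhds by blast
  qed
qed

end
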